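(* Let $\Gamma$ be a Deza graph with parameters $(n,k,k-1,a)$, $k>1$, $\beta=1$. Let $x,y$ be two $A$-vertices with $\{x,x_b\}\ne\{y,y_b\}$. Then either all possible edges between $\{x,x_b\}$ and $\{y,y_b\}$ are present in $\Gamma$, or there are no such edges.
   Context: A Deza graph with parameters $(n,k,b,a)$, $a\le b$, is a $k$-regular graph on $n$ vertices in which any two distinct vertices have $a$ or $b$ common neighbours; $\beta$ is the number of vertices $u\ne v$ with exactly $b$ common neighbours with a given vertex $v$ (independent of $v$). Since $\beta=1$, for each vertex $x$ let $x_b$ denote the unique vertex having $b=k-1$ common neighbours with $x$. A vertex $x$ is an $A$-vertex if $x$ is adjacent to $x_b$, and an $NA$-vertex otherwise. *)

theory Defs
  imports Main
begin

definition common_nbrs :: "'a set \<Rightarrow> ('a \<Rightarrow> 'a \<Rightarrow> bool) \<Rightarrow> 'a \<Rightarrow> 'a \<Rightarrow> nat" where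
  "common_nbrs V E x y = card {z \<in> V. E x z \<and> E y z}"

definition deza_graph :: "'a set \<Rightarrow> ('a \<Rightarrow> 'a \<Rightarrow> bool) \<Rightarrow> nat \<Rightarrow> nat \<Rightarrow> nat \<Rightarrow> nat \<Rightarrow> bool" where
  "deza_graph V E n k b a \<longleftrightarrow>
     finite V \<and> card V = n \<and>
     (\<forall>x y. E x y \<longrightarrow> x \<in> V \<and> y \<in> V) \<and>
     (\<forall>x y. E x y \<longrightarrow> E y x) \<and>
     (\<forall>x. \<not> E x x) \<and>
     (\<forall>x \<in> V. card {y \<in> V. E x y} = k) \<and>
     a \<le> b \<and>
     (\<forall>x \<in> V. \<forall>y \<in> V. x \<noteq> y \<longrightarrow> common_nbrs V E x y = a \<or> common_nbrs V E x y = b)"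

definition deza_beta :: "'a set \<Rightarrow> ('a \<Rightarrow> 'a \<Rightarrow> bool) \<Rightarrow> nat \<Rightarrow> nat \<Rightarrow> bool" where
  "deza_beta V E b \<beta> \<longleftrightarrow> (\<forall>v \<in> V. card {u \<in> V. u \<noteq> v \<and> common_nbrs V E u v = b} = \<beta>)"

text \<open>x_b: the unique vertex having b common neighbours with x (meaningful when beta = 1).\<close>
definition b_vertex :: "'a set \<Rightarrow> ('a \<Rightarrow> 'a \<Rightarrow> bool) \<Rightarrow> nat \<Rightarrow> 'a \<Rightarrow> 'a" where
  "b_vertex V E b x = (THE y. y \<in> V \<and> y \<noteq> x \<and> common_nbrs V E x y = b)"

definition A_vertex :: "'a set \<Rightarrow> ('a \<Rightarrow> 'a \<Rightarrow> bool) \<Rightarrow> nat \<Rightarrow> 'a \<Rightarrow> bool" where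
  "A_vertex V E b x \<longleftrightarrow> x \<in> V \<and> E x (b_vertex V E b x)"

end

theory Submission
  imports Defs
begin

text \<open>The b-partner x' of an A-vertex x is adjacent to x and shares k - 1 of its k neighbours
  with it, so N(x) - {x'} = N(x') - {x}: the two vertices are twins. With beta = 1 the map
  x \<mapsto> x' is an involution, hence distinct pairs {x, x'} and {y, y'} are disjoint, and
  twinness gives E x y = E x' y = E x' y' = E x y'.\<close>

definition twins :: "('a \<Rightarrow> 'a \<Rightarrow> bool) \<Rightarrow> 'a \<Rightarrow> 'a \<Rightarrow> bool" where
  "twins E u v \<longleftrightarrow> (\<forall>z. z \<noteq> u \<longrightarrow> z \<noteq> v \<longrightarrow> E u z = E v z)"

lemma common_nbrs_commute: "common_nbrs V E x y = common_nbrs V E y x"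
  unfolding common_nbrs_def by (metis (no_types, lifting) Collect_cong)

lemma twins_if_adjacent_common_nbrs:
  assumes "finite V" and in_V: "\<And>p q. E p q \<Longrightarrow> p \<in> V \<and> q \<in> V"
    and irrefl: "\<And>p. \<not> E p p"
    and deg_u: "card {z \<in> V. E u z} = k" and deg_v: "card {z \<in> V. E v z} = k"
    and "E u v" "E v u" and common: "common_nbrs V E u v = k - 1"
  shows "twins E u v"
proof -
  let ?S = "{z \<in> V. E u z \<and> E v z}"
  have card_S: "card ?S = k - 1" using common unfolding common_nbrs_def .
  have "card ({z \<in> V. E u z} - {v}) = k - 1"
    using deg_u \<open>E u v\<close> in_V \<open>finite V\<close> by (simp add: card_Diff_singleton)
  moreover have "?S \<subseteq> {z \<in> V. E u z} - {v}" using irrefl by auto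
  ultimately have S_u: "?S = {z \<in> V. E u z} - {v}"
    using card_S \<open>finite V\<close> by (intro card_subset_eq) auto
  have "card ({z \<in> V. E v z} - {u}) = k - 1"
    using deg_v \<open>E v u\<close> in_V \<open>finite V\<close> by (simp add: card_Diff_singleton)
  moreover have "?S \<subseteq> {z \<in> V. E v z} - {u}" using irrefl by auto
  ultimately have S_v: "?S = {z \<in> V. E v z} - {u}"
    using card_S \<open>finite V\<close> by (intro card_subset_eq) auto
  show ?thesis
    unfolding twins_def
  proof (intro allI impI)
    fix z assume "z \<noteq> u" "z \<noteq> v"
    then have "E u z \<longleftrightarrow> z \<in> {z \<in> V. E u z} - {v}" "E v z \<longleftrightarrow> z \<in> {z \<in> V. E v z} - {u}"
      using in_V by auto
    then show "E u z = E v z" using S_u S_v by blast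
  qed
qed

lemma twins_pairs_all_or_none:
  assumes sym: "\<And>p q. E p q \<Longrightarrow> E q p"
    and "twins E u u'" "twins E w w'" and disjoint: "{u, u'} \<inter> {w, w'} = {}"
  shows "(\<forall>p \<in> {u, u'}. \<forall>q \<in> {w, w'}. E p q) \<or> (\<forall>p \<in> {u, u'}. \<forall>q \<in> {w, w'}. \<not> E p q)"
proof -
  have "E u w = E u' w" "E u w' = E u' w'" "E w u = E w' u" "E w u' = E w' u'"
    using assms(2,3) disjoint unfolding twins_def by auto
  then have "E u w = E u w'" "E u w = E u' w" "E u w = E u' w'"
    using sym by metis+
  then show ?thesis by auto
qed

lemma involution_pairs_disjoint:
  assumes "f (f x) = x" "f (f y) = y" "{x, f x} \<noteq> {y, f y}"
  shows "{x, f x} \<inter> {y, f y} = {}"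
proof -
  have "y \<noteq> x" "y \<noteq> f x" "f y \<noteq> x" "f y \<noteq> f x"
    using assms by (metis insert_commute)+
  then show ?thesis by auto
qed

lemma b_vertex_ex1:
  assumes "deza_beta V E b 1" "v \<in> V"
  shows "\<exists>!u. u \<in> V \<and> u \<noteq> v \<and> common_nbrs V E v u = b"
proof -
  have "card {u \<in> V. u \<noteq> v \<and> common_nbrs V E u v = b} = 1"
    using assms unfolding deza_beta_def by blast
  then obtain c where "{u \<in> V. u \<noteq> v \<and> common_nbrs V E u v = b} = {c}"
    using card_1_singletonE by blast
  then show ?thesis
    by (simp add: common_nbrs_commute[of V E v] set_eq_iff)
qed

lemma b_vertex_spec:
  assumes "deza_beta V E b 1" "v \<in> V"
  shows "b_vertex V E b v \<in> V" "b_vertex V E b v \<noteq> v" "common_nbrs V E v (b_vertex V E b v) = b"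
  using theI'[OF b_vertex_ex1[OF assms]] unfolding b_vertex_def by auto

lemma b_vertex_eqI:
  assumes "deza_beta V E b 1" "v \<in> V" "u \<in> V" "u \<noteq> v" "common_nbrs V E v u = b"
  shows "b_vertex V E b v = u"
  unfolding b_vertex_def using assms(3-5) by (intro the1_equality[OF b_vertex_ex1[OF assms(1,2)]]) simp

lemma b_vertex_b_vertex:
  assumes "deza_beta V E b 1" "v \<in> V"
  shows "b_vertex V E b (b_vertex V E b v) = v"
  using b_vertex_spec[OF assms] assms
  by (intro b_vertex_eqI) (auto simp: common_nbrs_commute)

lemma A_vertex_twins:
  assumes deza: "deza_graph V E n k (k - 1) a" and beta: "deza_beta V E (k - 1) 1"
    and "A_vertex V E (k - 1) x"
  shows "twins E x (b_vertex V E (k - 1) x)"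
proof -
  have "x \<in> V" and adj: "E x (b_vertex V E (k - 1) x)"
    using \<open>A_vertex V E (k - 1) x\<close> unfolding A_vertex_def by auto
  from deza show ?thesis
    unfolding deza_graph_def
    using adj b_vertex_spec[OF beta \<open>x \<in> V\<close>]
    by (intro twins_if_adjacent_common_nbrs[where V = V and k = k]) auto
qed

theorem lemma3:
  fixes V :: "'a set" and E :: "'a \<Rightarrow> 'a \<Rightarrow> bool" and n k a :: nat and x y :: 'a
  assumes "deza_graph V E n k (k - 1) a"
    and "k > 1"
    and "deza_beta V E (k - 1) 1"
    and "A_vertex V E (k - 1) x" and "A_vertex V E (k - 1) y"
    and "{x, b_vertex V E (k - 1) x} \<noteq> {y, b_vertex V E (k - 1) y}"
  shows "(\<forall>u \<in> {x, b_vertex V E (k - 1) x}. \<forall>w \<in> {y, b_vertex V E (k - 1) y}. E u w)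
       \<or> (\<forall>u \<in> {x, b_vertex V E (k - 1) x}. \<forall>w \<in> {y, b_vertex V E (k - 1) y}. \<not> E u w)"
proof (rule twins_pairs_all_or_none)
  show "\<And>p q. E p q \<Longrightarrow> E q p" using assms(1) unfolding deza_graph_def by blast
  show "twins E x (b_vertex V E (k - 1) x)" by (rule A_vertex_twins[OF assms(1,3,4)])
  show "twins E y (b_vertex V E (k - 1) y)" by (rule A_vertex_twins[OF assms(1,3,5)])
  have "x \<in> V" "y \<in> V" using assms(4,5) unfolding A_vertex_def by auto
  then show "{x, b_vertex V E (k - 1) x} \<inter> {y, b_vertex V E (k - 1) y} = {}"
    by (intro involution_pairs_disjoint b_vertex_b_vertex[OF assms(3)] assms(6))
qed

end
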